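(* Let $H=(A,B;E)$ be a bipartite graph with parts $A,B$, let $n_1=|A|$, $n_2=|B|$, and let $\alpha=|E|/(n_1n_2)$ be its edge density. Then $H$ contains a $K_p^{(3)}$-immersion for every $p\in\mathbb{N}$ with $p\leq\min\{\alpha n_1/16,\ \alpha^2 n_2/192\}$.
   Context: An $H'$-immersion in a graph $G$ is an injective map $\phi:V(H')\to V(G)$ with, for each $uv\in E(H')$, a $\phi(u)$–$\phi(v)$ path $P_{uv}$ in $G$, the paths pairwise edge-disjoint; a $K_p^{(3)}$-immersion is a $K_p$-immersion in which every path $P_{uv}$ has length exactly $4$. *)

theory Defs
  imports Complex_Main
begin

definition bipartite_graph :: "'a set \<Rightarrow> 'a set \<Rightarrow> 'a set set \<Rightarrow> bool" where
  "bipartite_graph A B E \<longleftrightarrow> finite A \<and> finite B \<and> A \<inter> B = {} \<and>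
     (\<forall>e\<in>E. \<exists>a\<in>A. \<exists>b\<in>B. e = {a, b})"

definition edge_density :: "'a set \<Rightarrow> 'a set \<Rightarrow> 'a set set \<Rightarrow> real" where
  "edge_density A B E = real (card E) / (real (card A) * real (card B))"

text \<open>A path given by its vertex sequence: distinct vertices, consecutive ones adjacent.
  Its length is the number of edges, i.e. length xs - 1.\<close>
definition is_path :: "'a set set \<Rightarrow> 'a list \<Rightarrow> bool" where
  "is_path E xs \<longleftrightarrow> xs \<noteq> [] \<and> distinct xs \<and>
     (\<forall>i. Suc i < length xs \<longrightarrow> {xs ! i, xs ! Suc i} \<in> E)"

definition path_edges :: "'a list \<Rightarrow> 'a set set" where
  "path_edges xs = {{xs ! i, xs ! Suc i} | i. Suc i < length xs}"

text \<open>A K_p^(3)-immersion in the graph with vertex set V and edge set E: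
  K_p has vertex set {0..<p}; phi is injective into V, and every edge ij (i<j) of K_p
  is mapped to a phi(i)-phi(j) path of length exactly 4, the paths pairwise edge-disjoint.\<close>
definition has_K3_immersion :: "'a set \<Rightarrow> 'a set set \<Rightarrow> nat \<Rightarrow> bool" where
  "has_K3_immersion V E p \<longleftrightarrow>
     (\<exists>(\<phi> :: nat \<Rightarrow> 'a) (P :: nat \<Rightarrow> nat \<Rightarrow> 'a list).
        inj_on \<phi> {0..<p} \<and> \<phi> ` {0..<p} \<subseteq> V \<and>
        (\<forall>i j. i < j \<and> j < p \<longrightarrow>
            is_path E (P i j) \<and> length (P i j) = 5 \<and>
            hd (P i j) = \<phi> i \<and> last (P i j) = \<phi> j) \<and>
        (\<forall>i j k l. i < j \<and> j < p \<and> k < l \<and> l < p \<and> (i, j) \<noteq> (k, l) \<longrightarrow>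
            path_edges (P i j) \<inter> path_edges (P k l) = {}))"

end

theory Submission
  imports Defs "HOL-Analysis.Convex"
begin

(*
  Averaging over h in B (Cauchy-Schwarz) gives a vertex whose neighbourhood T in A has at
  least alpha n1 / 2 >= 8p elements, only few pairs of which have codegree below
  alpha^2 n2 / 16 >= 12p. Discarding the vertices of T lying in many such sparse pairs leaves
  at least half of T, and any p of the remaining vertices serve as branch vertices: every two
  of them have more than p common "good" partners c in T, each of which has more than 3p
  common neighbours with both. The paths phi(i) - b - c - b' - phi(j) are then chosen
  greedily: a centre c used by fewer than p earlier paths blocks at most 2(p - 1) vertices of B,
  the two branch vertices block at most p each, so among the more than 3p common neighbours
  there is always room for b and b'.
*)

definition nbhd :: "'a set set \<Rightarrow> 'a set \<Rightarrow> 'a \<Rightarrow> 'a set" where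
  "nbhd E X v = {x \<in> X. {v, x} \<in> E}"

definition codegree :: "'a set set \<Rightarrow> 'a set \<Rightarrow> 'a \<Rightarrow> 'a \<Rightarrow> nat" where
  "codegree E X u v = card (nbhd E X u \<inter> nbhd E X v)"

lemma path_edges_5: "path_edges [a, b, c, d, e] = {{a, b}, {b, c}, {c, d}, {d, e}}"
proof -
  have "path_edges [a, b, c, d, e] = (\<lambda>i. {[a, b, c, d, e] ! i, [a, b, c, d, e] ! Suc i}) ` {0..<4}"
    unfolding path_edges_def by auto
  moreover have "{0..<4::nat} = {0, 1, 2, 3}" by auto
  ultimately show ?thesis by (simp add: numeral_2_eq_2 numeral_3_eq_3)
qed

lemma finite_path_edges: "finite (path_edges xs)"
proof -
  have "path_edges xs = (\<lambda>i. {xs ! i, xs ! Suc i}) ` {i. Suc i < length xs}"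
    unfolding path_edges_def by auto
  moreover have "finite {i. Suc i < length xs}"
    by (rule finite_subset[of _ "{..<length xs}"]) auto
  ultimately show ?thesis by simp
qed

lemma finite_edges_at:
  assumes "finite U"
  shows "finite {x. {v, x} \<in> U}"
proof -
  have "inj (\<lambda>x. insert v {x})" by (auto intro: injI simp: doubleton_eq_iff)
  then show ?thesis using finite_vimageI[OF assms] by (simp add: vimage_def)
qed

lemma ex_in_diff_if_card_less:
  assumes "finite F" "card F < card S"
  shows "\<exists>x\<in>S. x \<notin> F"
  using assms card_mono leD by blast

lemma card_edges_bipartite:
  assumes "bipartite_graph A B E"
  shows "card E = (\<Sum>b\<in>B. card (nbhd E A b))"
proof -
  have finA: "finite A" and finB: "finite B" and AB: "A \<inter> B = {}"
    and edges: "\<forall>e\<in>E. \<exists>a\<in>A. \<exists>b\<in>B. e = {a, b}"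
    using assms unfolding bipartite_graph_def by auto
  define S where "S = Sigma B (nbhd E A)"
  have "E \<subseteq> (\<lambda>(b, a). {b, a}) ` S"
  proof
    fix e assume "e \<in> E"
    then obtain a b where "a \<in> A" "b \<in> B" "e = {b, a}"
      using edges by (auto simp: insert_commute)
    with \<open>e \<in> E\<close> show "e \<in> (\<lambda>(b, a). {b, a}) ` S"
      unfolding S_def nbhd_def by force
  qed
  moreover have "(\<lambda>(b, a). {b, a}) ` S \<subseteq> E"
    unfolding S_def nbhd_def by auto
  ultimately have "E = (\<lambda>(b, a). {b, a}) ` S" by blast
  moreover have "inj_on (\<lambda>(b, a). {b, a}) S"
    using AB unfolding inj_on_def S_def nbhd_def by (auto simp: doubleton_eq_iff)
  ultimately have "card E = card S" by (simp add: card_image)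
  also have "\<dots> = (\<Sum>b\<in>B. card (nbhd E A b))"
    unfolding S_def using finA finB by (simp add: nbhd_def)
  finally show ?thesis .
qed

lemma sum_card_filter_swap:
  assumes "finite X" "finite Y"
  shows "(\<Sum>x\<in>X. card {y\<in>Y. R x y}) = (\<Sum>y\<in>Y. card {x\<in>X. R x y})"
proof -
  have "(\<Sum>x\<in>X. card {y\<in>Y. R x y}) = (\<Sum>x\<in>X. \<Sum>y\<in>Y. if R x y then 1 else 0)"
    using assms by (simp add: sum.inter_filter[symmetric])
  also have "\<dots> = (\<Sum>y\<in>Y. \<Sum>x\<in>X. if R x y then 1 else 0)" by (rule sum.swap)
  also have "\<dots> = (\<Sum>y\<in>Y. card {x\<in>X. R x y})"
    using assms by (simp add: sum.inter_filter[symmetric])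
  finally show ?thesis .
qed

lemma sum_card_pairs_in_nbhd:
  assumes "finite B" "finite Pairs" "Pairs \<subseteq> A \<times> A"
  shows "(\<Sum>b\<in>B. card (Pairs \<inter> nbhd E A b \<times> nbhd E A b)) = (\<Sum>(x, y)\<in>Pairs. codegree E B x y)"
proof -
  have "(\<Sum>b\<in>B. card (Pairs \<inter> nbhd E A b \<times> nbhd E A b))
      = (\<Sum>b\<in>B. card {xy\<in>Pairs. fst xy \<in> nbhd E A b \<and> snd xy \<in> nbhd E A b})"
    by (intro sum.cong) (auto intro!: arg_cong[where f = card])
  also have "\<dots> = (\<Sum>xy\<in>Pairs. card {b\<in>B. fst xy \<in> nbhd E A b \<and> snd xy \<in> nbhd E A b})"
    using sum_card_filter_swap[OF assms(1,2),
        where R = "\<lambda>b xy. fst xy \<in> nbhd E A b \<and> snd xy \<in> nbhd E A b"] .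
  also have "\<dots> = (\<Sum>(x, y)\<in>Pairs. codegree E B x y)"
  proof (intro sum.cong refl, clarify)
    fix x y assume "(x, y) \<in> Pairs"
    then have "x \<in> A" "y \<in> A" using assms(3) by auto
    then have "{b\<in>B. x \<in> nbhd E A b \<and> y \<in> nbhd E A b} = nbhd E B x \<inter> nbhd E B y"
      unfolding nbhd_def by (auto simp: insert_commute)
    then show "card {b\<in>B. fst (x, y) \<in> nbhd E A b \<and> snd (x, y) \<in> nbhd E A b} = codegree E B x y"
      by (simp add: codegree_def)
  qed
  finally show ?thesis .
qed

lemma card_edges_squared_le:
  assumes "bipartite_graph A B E"
  shows "(real (card E))\<^sup>2 \<le> real (card B) * (\<Sum>b\<in>B. (real (card (nbhd E A b)))\<^sup>2)"
proof -
  have "(real (card E))\<^sup>2 = (\<Sum>b\<in>B. real (card (nbhd E A b)) * 1)\<^sup>2"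
    using card_edges_bipartite[OF assms] by simp
  also have "\<dots> \<le> (\<Sum>b\<in>B. (real (card (nbhd E A b)))\<^sup>2) * real (card B)"
    using Cauchy_Schwarz_ineq_sum[of "\<lambda>b. real (card (nbhd E A b))" "\<lambda>_. 1" B] by simp
  finally show ?thesis by (simp add: mult.commute)
qed

(* D is chosen so that the sparse pairs use up at most half of the Cauchy-Schwarz lower bound
   alpha^2 n1^2 n2 for the sum of the squared degrees of the vertices h in B. *)
lemma exists_vertex_with_few_sparse_pairs:
  assumes bip: "bipartite_graph A B E" and "A \<noteq> {}" "B \<noteq> {}"
  defines "D \<equiv> (edge_density A B E)\<^sup>2 * real (card B) / 16"
  shows "\<exists>h\<in>B. 8 * real (card {(x, y) \<in> nbhd E A h \<times> nbhd E A h. real (codegree E B x y) < D})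
                + (edge_density A B E * real (card A))\<^sup>2 / 2 \<le> (real (card (nbhd E A h)))\<^sup>2"
proof -
  define \<alpha> where "\<alpha> = edge_density A B E"
  have finA: "finite A" and finB: "finite B" using bip unfolding bipartite_graph_def by auto
  define n1 where "n1 = real (card A)"
  define n2 where "n2 = real (card B)"
  have n1_pos: "n1 > 0" and n2_pos: "n2 > 0"
    using assms(2,3) finA finB unfolding n1_def n2_def by (auto simp: card_gt_0_iff)
  define N where "N = nbhd E A"
  define Sparse where "Sparse = {(x, y) \<in> A \<times> A. real (codegree E B x y) < D}"
  define Z where "Z b = card (Sparse \<inter> N b \<times> N b)" for b
  have N_sub: "N b \<subseteq> A" for b unfolding N_def nbhd_def by auto
  have Z_eq: "{(x, y) \<in> N b \<times> N b. real (codegree E B x y) < D} = Sparse \<inter> N b \<times> N b" for b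
    using N_sub unfolding Sparse_def by auto
  have CS: "\<alpha>\<^sup>2 * n1\<^sup>2 * n2 \<le> (\<Sum>b\<in>B. (real (card (N b)))\<^sup>2)"
    using card_edges_squared_le[OF bip] n1_pos n2_pos unfolding \<alpha>_def edge_density_def n1_def n2_def N_def
    by (simp add: field_simps power2_eq_square)
  have Sparse_sub: "Sparse \<subseteq> A \<times> A" unfolding Sparse_def by auto
  then have "finite Sparse" using finA by (auto intro: finite_subset)
  then have "(\<Sum>b\<in>B. Z b) = (\<Sum>(x, y)\<in>Sparse. codegree E B x y)"
    unfolding Z_def N_def using finB Sparse_sub by (intro sum_card_pairs_in_nbhd)
  then have "(\<Sum>b\<in>B. real (Z b)) = (\<Sum>(x, y)\<in>Sparse. real (codegree E B x y))"
    unfolding of_nat_sum[symmetric] by (simp add: prod.case_distrib)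
  also have "\<dots> \<le> real (card Sparse) * D"
    using sum_bounded_above[of Sparse "\<lambda>(x, y). real (codegree E B x y)" D]
    unfolding Sparse_def by (force simp: case_prod_beta)
  also have "\<dots> \<le> n1\<^sup>2 * D"
  proof (rule mult_right_mono)
    have "card Sparse \<le> card (A \<times> A)" unfolding Sparse_def using finA by (intro card_mono) auto
    then show "real (card Sparse) \<le> n1\<^sup>2"
      unfolding n1_def by (simp add: card_cartesian_product power2_eq_square flip: of_nat_mult)
    show "0 \<le> D" unfolding D_def by simp
  qed
  finally have sparse: "8 * (\<Sum>b\<in>B. real (Z b)) \<le> \<alpha>\<^sup>2 * n1\<^sup>2 * n2 / 2"
    unfolding D_def n2_def \<alpha>_def by (simp add: mult_ac)
  define f where "f b = (real (card (N b)))\<^sup>2 - 8 * real (Z b) - (\<alpha> * n1)\<^sup>2 / 2" for b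
  have "(\<Sum>b\<in>B. f b)
      = (\<Sum>b\<in>B. (real (card (N b)))\<^sup>2) - 8 * (\<Sum>b\<in>B. real (Z b)) - n2 * (\<alpha> * n1)\<^sup>2 / 2"
    unfolding f_def n2_def by (simp add: sum_subtractf sum_distrib_left)
  moreover have "n2 * (\<alpha> * n1)\<^sup>2 / 2 = \<alpha>\<^sup>2 * n1\<^sup>2 * n2 / 2"
    by (simp add: power_mult_distrib)
  ultimately have "0 \<le> (\<Sum>b\<in>B. f b)"
    using CS sparse by linarith
  then obtain h where "h \<in> B" "0 \<le> f h"
    using sum_pos[of B "\<lambda>b. - f b"] finB assms(3) by (force simp: sum_negf)
  then have "8 * real (card {(x, y) \<in> N h \<times> N h. real (codegree E B x y) < D})
      + (\<alpha> * n1)\<^sup>2 / 2 \<le> (real (card (N h)))\<^sup>2"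
    unfolding f_def Z_def Z_eq by linarith
  then show ?thesis using \<open>h \<in> B\<close> unfolding N_def n1_def \<alpha>_def by blast
qed

lemma exists_subset_pairwise_many_common_good:
  fixes T :: "'a set" and good :: "'a \<Rightarrow> 'a \<Rightarrow> bool"
  assumes finT: "finite T" and big: "8 * p \<le> card T"
    and few_bad: "8 * card {(x, y) \<in> T \<times> T. \<not> good x y} \<le> (card T)\<^sup>2"
  shows "\<exists>S \<subseteq> T. card S = p \<and> (\<forall>x\<in>S. \<forall>y\<in>S. p < card {c \<in> T - S. good x c \<and> good y c})"
proof (cases "p = 0")
  case True
  then show ?thesis by auto
next
  case False
  define t where "t = card T"
  define bad where "bad x = {y \<in> T. \<not> good x y}" for x
  define R where "R = {x \<in> T. 4 * card (bad x) \<le> t}"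
  have t_pos: "0 < t" using big False unfolding t_def by linarith
  have "(\<Sum>x\<in>T. card (bad x)) = card {(x, y) \<in> T \<times> T. \<not> good x y}"
  proof -
    have "{(x, y) \<in> T \<times> T. \<not> good x y} = Sigma T bad" unfolding bad_def by auto
    then show ?thesis using finT by (simp add: bad_def)
  qed
  then have sum_bad: "8 * (\<Sum>x\<in>T. card (bad x)) \<le> t * t"
    using few_bad unfolding t_def by (simp add: power2_eq_square)
  have "card (T - R) * t \<le> (\<Sum>x\<in>T - R. 4 * card (bad x))"
    using sum_bounded_below[of "T - R" t "\<lambda>x. 4 * card (bad x)"] unfolding R_def by force
  also have "\<dots> \<le> 4 * (\<Sum>x\<in>T. card (bad x))"
    using finT by (simp add: sum_distrib_left[symmetric] sum_mono2)
  finally have "2 * card (T - R) * t \<le> t * t" using sum_bad by linarith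
  then have "2 * card (T - R) \<le> t" using t_pos by simp
  moreover have "card (T - R) = t - card R" "card R \<le> t"
    unfolding t_def R_def using finT by (auto intro: card_Diff_subset card_mono)
  ultimately have "p \<le> card R" using big unfolding t_def by linarith
  then obtain S where SR: "S \<subseteq> R" and cardS: "card S = p"
    by (meson obtain_subset_with_card_n)
  have ST: "S \<subseteq> T" using SR unfolding R_def by auto
  have "p < card {c \<in> T - S. good x c \<and> good y c}" if "x \<in> S" "y \<in> S" for x y
  proof -
    have light: "4 * card (bad x) \<le> t" "4 * card (bad y) \<le> t" using that SR unfolding R_def by auto
    define C where "C = {c \<in> T. good x c \<and> good y c}"
    have "C = T - (bad x \<union> bad y)" unfolding C_def bad_def by auto
    moreover have "finite (bad x \<union> bad y)" using finT unfolding bad_def by auto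
    ultimately have "t - card (bad x \<union> bad y) \<le> card C"
      unfolding t_def by (simp add: diff_card_le_card_Diff)
    moreover have "card (bad x \<union> bad y) \<le> card (bad x) + card (bad y)" by (rule card_Un_le)
    ultimately have "4 * p \<le> card C" using big light unfolding t_def by linarith
    moreover have "C - S = {c \<in> T - S. good x c \<and> good y c}" unfolding C_def by auto
    then have "card C - card S \<le> card {c \<in> T - S. good x c \<and> good y c}"
      using ST finT by (metis diff_card_le_card_Diff finite_subset)
    ultimately show ?thesis using cardS False by linarith
  qed
  then show ?thesis using ST cardS by blast
qed

definition four_path :: "'a set \<Rightarrow> 'a set \<Rightarrow> 'a set set \<Rightarrow> 'a set \<Rightarrow> 'a \<Rightarrow> 'a \<Rightarrow> 'a list \<Rightarrow> bool" where
  "four_path A B E X u v xs \<longleftrightarrow>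
     (\<exists>b c b'. xs = [u, b, c, b', v] \<and> c \<in> A - X \<and> b \<noteq> b' \<and>
        b \<in> nbhd E B u \<inter> nbhd E B c \<and> b' \<in> nbhd E B c \<inter> nbhd E B v)"

lemma four_path_is_path:
  assumes AB: "A \<inter> B = {}" and xs: "four_path A B E X u v xs"
    and "X \<subseteq> A" "u \<in> X" "v \<in> X" "u \<noteq> v"
  shows "is_path E xs \<and> length xs = 5 \<and> hd xs = u \<and> last xs = v"
proof -
  obtain b c b' where xs_eq: "xs = [u, b, c, b', v]" and c: "c \<in> A - X" and "b \<noteq> b'"
    and b: "b \<in> nbhd E B u \<inter> nbhd E B c" and b': "b' \<in> nbhd E B c \<inter> nbhd E B v"
    using xs unfolding four_path_def by blast
  have "distinct xs" unfolding xs_eq using assms c b b' \<open>b \<noteq> b'\<close> by (auto simp: nbhd_def)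
  moreover have "{xs ! i, xs ! Suc i} \<in> E" if "Suc i < length xs" for i
  proof -
    have "i \<in> {0, 1, 2, 3}" using that unfolding xs_eq by auto
    then show ?thesis
      using b b' unfolding xs_eq by (auto simp: nbhd_def insert_commute numeral_2_eq_2 numeral_3_eq_3)
  qed
  ultimately show ?thesis unfolding is_path_def xs_eq by simp
qed

lemma four_path_edges_at:
  assumes AB: "A \<inter> B = {}" and xs: "four_path A B E X u w xs" and "v \<in> A"
  shows "{x. {v, x} \<in> path_edges xs} \<subseteq>
           (if v = u then {xs ! 1} else {}) \<union> (if v = w then {xs ! 3} else {}) \<union>
           (if v = xs ! 2 then {xs ! 1, xs ! 3} else {})"
proof -
  obtain b c b' where xs_eq: "xs = [u, b, c, b', w]" and "b \<in> B" "b' \<in> B"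
    using xs unfolding four_path_def nbhd_def by blast
  then have "v \<noteq> b" "v \<noteq> b'" using AB \<open>v \<in> A\<close> by auto
  then show ?thesis unfolding xs_eq path_edges_5 by (auto simp: doubleton_eq_iff)
qed

lemma card_four_path_edges_at_end:
  assumes "A \<inter> B = {}" "four_path A B E X u w xs" "X \<subseteq> A" "v \<in> X" "u \<noteq> w"
  shows "card {x. {v, x} \<in> path_edges xs} \<le> (if v = u \<or> v = w then 1 else 0)"
proof -
  have vA: "v \<in> A" and "v \<noteq> xs ! 2" using assms(2-4) unfolding four_path_def by auto
  then have "{x. {v, x} \<in> path_edges xs} \<subseteq>
      (if v = u then {xs ! 1} else {}) \<union> (if v = w then {xs ! 3} else {})"
    using four_path_edges_at[OF assms(1,2) vA] by simp
  then have "card {x. {v, x} \<in> path_edges xs} \<le>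
      card ((if v = u then {xs ! 1} else {}) \<union> (if v = w then {xs ! 3} else {}))"
    by (rule card_mono[rotated]) simp
  also have "\<dots> \<le> (if v = u \<or> v = w then 1 else 0)" using assms(5) by auto
  finally show ?thesis .
qed

lemma card_four_path_edges_at_centre:
  assumes "A \<inter> B = {}" "four_path A B E X u w xs" "v \<in> A - X" "u \<in> X" "w \<in> X"
  shows "card {x. {v, x} \<in> path_edges xs} \<le> (if v = xs ! 2 then 2 else 0)"
proof -
  have vA: "v \<in> A" and "v \<noteq> u" "v \<noteq> w" using assms(3-5) by auto
  then have "{x. {v, x} \<in> path_edges xs} \<subseteq> (if v = xs ! 2 then {xs ! 1, xs ! 3} else {})"
    using four_path_edges_at[OF assms(1,2) vA] by simp
  then have "card {x. {v, x} \<in> path_edges xs} \<le> card (if v = xs ! 2 then {xs ! 1, xs ! 3} else {})"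
    by (rule card_mono[rotated]) simp
  also have "\<dots> \<le> (if v = xs ! 2 then 2 else 0)" by (simp add: card_insert_if)
  finally show ?thesis .
qed

lemma exists_four_path_avoiding:
  assumes finU: "finite U" and c: "c \<in> A - X"
    and room_u: "card {x. {u, x} \<in> U} + card {x. {c, x} \<in> U} < codegree E B u c"
    and room_v: "card {x. {v, x} \<in> U} + card {x. {c, x} \<in> U} + 1 < codegree E B v c"
  shows "\<exists>xs. four_path A B E X u v xs \<and> path_edges xs \<inter> U = {}"
proof -
  define F where "F w = {x. {w, x} \<in> U}" for w
  have fin: "finite (F w)" for w unfolding F_def using finU by (rule finite_edges_at)
  have "card (F u \<union> F c) < card (nbhd E B u \<inter> nbhd E B c)"
    using room_u card_Un_le[of "F u" "F c"] unfolding codegree_def F_def by linarith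
  then obtain b where b: "b \<in> nbhd E B u \<inter> nbhd E B c" "b \<notin> F u \<union> F c"
    using ex_in_diff_if_card_less[of "F u \<union> F c"] fin by blast
  have "nbhd E B v \<inter> nbhd E B c = nbhd E B c \<inter> nbhd E B v" by (rule Int_commute)
  then have "card (F v \<union> F c \<union> {b}) < card (nbhd E B c \<inter> nbhd E B v)"
    using room_v card_Un_le[of "F v" "F c"] card_Un_le[of "F v \<union> F c" "{b}"]
    unfolding codegree_def F_def by simp
  then obtain b' where b': "b' \<in> nbhd E B c \<inter> nbhd E B v" "b' \<notin> F v \<union> F c \<union> {b}"
    using ex_in_diff_if_card_less[of "F v \<union> F c \<union> {b}"] fin by blast
  have "four_path A B E X u v [u, b, c, b', v]"
    unfolding four_path_def using b b' c by blast
  moreover have "path_edges [u, b, c, b', v] \<inter> U = {}"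
    using b b' unfolding path_edges_5 F_def by (auto simp: insert_commute)
  ultimately show ?thesis by blast
qed

lemma exists_lightly_loaded:
  assumes "finite Q" "card Q \<le> p * p" "p < card C" "0 < p"
  shows "\<exists>c\<in>C. card {q \<in> Q. f q = c} < p"
proof (rule ccontr)
  assume "\<not> ?thesis"
  then have heavy: "p \<le> card {q \<in> Q. f q = c}" if "c \<in> C" for c using that not_le by blast
  have finC: "finite C" using assms(3) card.infinite by fastforce
  have "card C * p \<le> (\<Sum>c\<in>C. card {q \<in> Q. f q = c})"
    using sum_bounded_below[of C p] heavy by simp
  also have "\<dots> = card (\<Union>c\<in>C. {q \<in> Q. f q = c})"
    by (rule card_UN_disjoint[symmetric]) (use finC assms(1) in auto)
  also have "\<dots> \<le> card Q" by (rule card_mono) (use assms(1) in auto)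
  finally have "card C * p \<le> p * p" using assms(2) by linarith
  then show False using assms(3,4) by simp
qed

definition index_pairs :: "nat \<Rightarrow> (nat \<times> nat) set" where
  "index_pairs p = {(i, j). i < j \<and> j < p}"

lemma index_pairs_subset: "index_pairs p \<subseteq> {0..<p} \<times> {0..<p}"
  unfolding index_pairs_def by auto

lemma finite_index_pairs: "finite (index_pairs p)"
  using index_pairs_subset by (rule finite_subset) simp

definition routing ::
    "'a set \<Rightarrow> 'a set \<Rightarrow> 'a set set \<Rightarrow> (nat \<Rightarrow> 'a) \<Rightarrow> nat \<Rightarrow> (nat \<times> nat) set \<Rightarrow> (nat \<times> nat \<Rightarrow> 'a list) \<Rightarrow> bool"
  where
  "routing A B E \<phi> p Q P \<longleftrightarrow>
     (\<forall>(i, j)\<in>Q. four_path A B E (\<phi> ` {0..<p}) (\<phi> i) (\<phi> j) (P (i, j))) \<and>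
     (\<forall>q\<in>Q. \<forall>q'\<in>Q. q \<noteq> q' \<longrightarrow> path_edges (P q) \<inter> path_edges (P q') = {})"

lemma card_routing_edges_at_branch:
  assumes AB: "A \<inter> B = {}" and inj: "inj_on \<phi> {0..<p}" and im: "\<phi> ` {0..<p} \<subseteq> A"
    and R: "routing A B E \<phi> p Q P" and Q: "Q \<subseteq> index_pairs p" and "i < p"
  shows "card {x. {\<phi> i, x} \<in> (\<Union>q\<in>Q. path_edges (P q))} \<le> p"
proof -
  have finQ: "finite Q" using Q finite_index_pairs by (rule finite_subset)
  have "card {x. {\<phi> i, x} \<in> (\<Union>q\<in>Q. path_edges (P q))}
      = card (\<Union>q\<in>Q. {x. {\<phi> i, x} \<in> path_edges (P q)})"
    by (rule arg_cong[where f = card]) auto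
  also have "\<dots> \<le> (\<Sum>q\<in>Q. card {x. {\<phi> i, x} \<in> path_edges (P q)})"
    using finQ by (rule card_UN_le)
  also have "\<dots> \<le> (\<Sum>q\<in>Q. if i = fst q \<or> i = snd q then 1 else 0)"
  proof (rule sum_mono)
    fix q assume "q \<in> Q"
    then obtain k l where q: "q = (k, l)" "k < l" "l < p" using Q by (auto simp: index_pairs_def)
    then have fp: "four_path A B E (\<phi> ` {0..<p}) (\<phi> k) (\<phi> l) (P q)"
      using R \<open>q \<in> Q\<close> unfolding routing_def by auto
    have "\<phi> i = \<phi> k \<longleftrightarrow> i = k" "\<phi> i = \<phi> l \<longleftrightarrow> i = l" "\<phi> k \<noteq> \<phi> l"
      using q \<open>i < p\<close> by (simp_all add: inj_on_eq_iff[OF inj])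
    then show "card {x. {\<phi> i, x} \<in> path_edges (P q)} \<le> (if i = fst q \<or> i = snd q then 1 else 0)"
      using card_four_path_edges_at_end[OF AB fp im, of "\<phi> i"] q \<open>i < p\<close> by auto
  qed
  also have "\<dots> = card {q \<in> Q. i = fst q \<or> i = snd q}"
    using finQ by (simp add: sum.inter_filter[symmetric])
  also have "\<dots> \<le> card {0..<p}"
  proof (rule card_inj_on_le)
    show "inj_on (\<lambda>q. fst q + snd q - i) {q \<in> Q. i = fst q \<or> i = snd q}"
    proof (rule inj_onI)
      fix q q' assume "q \<in> {q \<in> Q. i = fst q \<or> i = snd q}" "q' \<in> {q \<in> Q. i = fst q \<or> i = snd q}"
        and eq: "fst q + snd q - i = fst q' + snd q' - i"
      moreover have "fst q < snd q" "fst q' < snd q'"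
        using calculation(1,2) Q unfolding index_pairs_def by auto
      ultimately show "q = q'" by (auto simp: prod_eq_iff)
    qed
    show "(\<lambda>q. fst q + snd q - i) ` {q \<in> Q. i = fst q \<or> i = snd q} \<subseteq> {0..<p}"
      using Q unfolding index_pairs_def by auto
  qed simp
  finally show ?thesis by simp
qed

lemma card_routing_edges_at_centre:
  assumes AB: "A \<inter> B = {}" and R: "routing A B E \<phi> p Q P" and Q: "Q \<subseteq> index_pairs p"
    and c: "c \<in> A - \<phi> ` {0..<p}"
  shows "card {x. {c, x} \<in> (\<Union>q\<in>Q. path_edges (P q))} \<le> 2 * card {q \<in> Q. P q ! 2 = c}"
proof -
  have finQ: "finite Q" using Q finite_index_pairs by (rule finite_subset)
  have "card {x. {c, x} \<in> (\<Union>q\<in>Q. path_edges (P q))}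
      = card (\<Union>q\<in>Q. {x. {c, x} \<in> path_edges (P q)})"
    by (rule arg_cong[where f = card]) auto
  also have "\<dots> \<le> (\<Sum>q\<in>Q. card {x. {c, x} \<in> path_edges (P q)})"
    using finQ by (rule card_UN_le)
  also have "\<dots> \<le> (\<Sum>q\<in>Q. if P q ! 2 = c then 2 else 0)"
  proof (rule sum_mono)
    fix q assume "q \<in> Q"
    then obtain k l where q: "q = (k, l)" "k < l" "l < p" using Q by (auto simp: index_pairs_def)
    then have "four_path A B E (\<phi> ` {0..<p}) (\<phi> k) (\<phi> l) (P q)"
      using R \<open>q \<in> Q\<close> unfolding routing_def by auto
    from card_four_path_edges_at_centre[OF AB this c] q
    show "card {x. {c, x} \<in> path_edges (P q)} \<le> (if P q ! 2 = c then 2 else 0)" by auto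
  qed
  also have "\<dots> = 2 * card {q \<in> Q. P q ! 2 = c}"
    using finQ by (simp add: sum.inter_filter[symmetric])
  finally show ?thesis .
qed

definition centre_candidates ::
    "'a set \<Rightarrow> 'a set \<Rightarrow> 'a set set \<Rightarrow> 'a set \<Rightarrow> nat \<Rightarrow> 'a \<Rightarrow> 'a \<Rightarrow> 'a set" where
  "centre_candidates A B E X k x y = {c \<in> A - X. k < codegree E B x c \<and> k < codegree E B y c}"

lemma routing_insertI:
  assumes R: "routing A B E \<phi> p Q P" and "(i, j) \<notin> Q"
    and xs: "four_path A B E (\<phi> ` {0..<p}) (\<phi> i) (\<phi> j) xs"
    and new_disjoint: "\<And>q. q \<in> Q \<Longrightarrow> path_edges xs \<inter> path_edges (P q) = {}"
  shows "routing A B E \<phi> p (insert (i, j) Q) (P((i, j) := xs))"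
proof -
  have paths: "\<forall>(k, l)\<in>Q. four_path A B E (\<phi> ` {0..<p}) (\<phi> k) (\<phi> l) (P (k, l))"
    and disjoint: "\<forall>q\<in>Q. \<forall>q'\<in>Q. q \<noteq> q' \<longrightarrow> path_edges (P q) \<inter> path_edges (P q') = {}"
    using R unfolding routing_def by blast+
  show ?thesis
    unfolding routing_def
  proof (intro conjI ballI impI)
    fix q assume "q \<in> insert (i, j) Q"
    then show "case q of (k, l) \<Rightarrow> four_path A B E (\<phi> ` {0..<p}) (\<phi> k) (\<phi> l) ((P((i, j) := xs)) (k, l))"
      using paths xs \<open>(i, j) \<notin> Q\<close> by (cases q) auto
  next
    fix q q' assume "q \<in> insert (i, j) Q" "q' \<in> insert (i, j) Q" "q \<noteq> q'"
    then show "path_edges ((P((i, j) := xs)) q) \<inter> path_edges ((P((i, j) := xs)) q') = {}"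
      using disjoint[rule_format, of q q'] new_disjoint[of q] new_disjoint[of q'] \<open>(i, j) \<notin> Q\<close>
      by (auto simp: Int_commute)
  qed
qed

lemma routing_insert:
  assumes AB: "A \<inter> B = {}" and inj: "inj_on \<phi> {0..<p}" and im: "\<phi> ` {0..<p} \<subseteq> A"
    and R: "routing A B E \<phi> p Q P" and Q: "Q \<subseteq> index_pairs p"
    and ij: "(i, j) \<in> index_pairs p" "(i, j) \<notin> Q"
    and centres: "p < card (centre_candidates A B E (\<phi> ` {0..<p}) (3 * p) (\<phi> i) (\<phi> j))"
  shows "\<exists>xs. routing A B E \<phi> p (insert (i, j) Q) (P((i, j) := xs))"
proof -
  have "i < p" "j < p" "0 < p" using ij unfolding index_pairs_def by auto
  have finQ: "finite Q" using Q finite_index_pairs by (rule finite_subset)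
  have "card Q \<le> p * p"
    using card_mono[OF _ order.trans[OF Q index_pairs_subset]] by simp
  then obtain c where c: "c \<in> A - \<phi> ` {0..<p}" "3 * p < codegree E B (\<phi> i) c" "3 * p < codegree E B (\<phi> j) c"
    and light: "card {q \<in> Q. P q ! 2 = c} < p"
    using exists_lightly_loaded[OF finQ _ centres \<open>0 < p\<close>, of "\<lambda>q. P q ! 2"]
    unfolding centre_candidates_def by blast
  define U where "U = (\<Union>q\<in>Q. path_edges (P q))"
  have "finite U" unfolding U_def using finQ finite_path_edges by blast
  have "card {x. {c, x} \<in> U} \<le> 2 * card {q \<in> Q. P q ! 2 = c}"
    unfolding U_def using card_routing_edges_at_centre[OF AB R Q c(1)] .
  moreover have "card {x. {\<phi> i, x} \<in> U} \<le> p" "card {x. {\<phi> j, x} \<in> U} \<le> p"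
    unfolding U_def using card_routing_edges_at_branch[OF AB inj im R Q] \<open>i < p\<close> \<open>j < p\<close> by auto
  ultimately have "card {x. {\<phi> i, x} \<in> U} + card {x. {c, x} \<in> U} < codegree E B (\<phi> i) c"
    and "card {x. {\<phi> j, x} \<in> U} + card {x. {c, x} \<in> U} + 1 < codegree E B (\<phi> j) c"
    using c(2,3) light by linarith+
  then obtain xs where xs: "four_path A B E (\<phi> ` {0..<p}) (\<phi> i) (\<phi> j) xs" "path_edges xs \<inter> U = {}"
    using exists_four_path_avoiding[OF \<open>finite U\<close> c(1)] by blast
  have "path_edges xs \<inter> path_edges (P q) = {}" if "q \<in> Q" for q
    using xs(2) that unfolding U_def by blast
  then show ?thesis using routing_insertI[OF R ij(2) xs(1)] by blast
qed

lemma routing_exists: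
  assumes AB: "A \<inter> B = {}" and inj: "inj_on \<phi> {0..<p}" and im: "\<phi> ` {0..<p} \<subseteq> A"
    and centres: "\<And>i j. (i, j) \<in> index_pairs p \<Longrightarrow>
      p < card (centre_candidates A B E (\<phi> ` {0..<p}) (3 * p) (\<phi> i) (\<phi> j))"
  shows "\<exists>P. routing A B E \<phi> p (index_pairs p) P"
proof -
  have "\<exists>P. routing A B E \<phi> p Q P" if "finite Q" "Q \<subseteq> index_pairs p" for Q
    using that
  proof (induction Q rule: finite_induct)
    case empty
    show ?case by (simp add: routing_def)
  next
    case (insert q Q)
    then obtain P where R: "routing A B E \<phi> p Q P" by blast
    obtain i j where q: "q = (i, j)" by fastforce
    have "(i, j) \<in> index_pairs p" "(i, j) \<notin> Q" "Q \<subseteq> index_pairs p"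
      using insert.hyps(2) insert.prems q by auto
    then show ?case using routing_insert[OF AB inj im R] centres q by blast
  qed
  then show ?thesis using finite_index_pairs by blast
qed

lemma has_K3_immersion_if_routing:
  assumes AB: "A \<inter> B = {}" and inj: "inj_on \<phi> {0..<p}" and im: "\<phi> ` {0..<p} \<subseteq> A"
    and R: "routing A B E \<phi> p (index_pairs p) P"
  shows "has_K3_immersion (A \<union> B) E p"
proof -
  have paths: "\<forall>i j. i < j \<and> j < p \<longrightarrow>
      is_path E (P (i, j)) \<and> length (P (i, j)) = 5 \<and> hd (P (i, j)) = \<phi> i \<and> last (P (i, j)) = \<phi> j"
  proof (intro allI impI)
    fix i j assume ij: "i < j \<and> j < p"
    then have "four_path A B E (\<phi> ` {0..<p}) (\<phi> i) (\<phi> j) (P (i, j))"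
      using R unfolding routing_def index_pairs_def by auto
    moreover have "\<phi> i \<noteq> \<phi> j" using ij by (simp add: inj_on_eq_iff[OF inj])
    ultimately show "is_path E (P (i, j)) \<and> length (P (i, j)) = 5 \<and>
        hd (P (i, j)) = \<phi> i \<and> last (P (i, j)) = \<phi> j"
      using four_path_is_path[OF AB _ im] ij by auto
  qed
  have "\<forall>q\<in>index_pairs p. \<forall>q'\<in>index_pairs p. q \<noteq> q' \<longrightarrow> path_edges (P q) \<inter> path_edges (P q') = {}"
    using R unfolding routing_def by blast
  then have disjoint: "\<forall>i j k l. i < j \<and> j < p \<and> k < l \<and> l < p \<and> (i, j) \<noteq> (k, l) \<longrightarrow>
      path_edges (P (i, j)) \<inter> path_edges (P (k, l)) = {}"
    unfolding index_pairs_def by simp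
  show ?thesis unfolding has_K3_immersion_def
    by (intro exI[of _ \<phi>] exI[of _ "\<lambda>i j. P (i, j)"]) (use inj im paths disjoint in auto)
qed

lemma has_K3_immersion_if_many_centres:
  assumes bip: "bipartite_graph A B E" and S: "S \<subseteq> A" "card S = p"
    and centres: "\<And>x y. x \<in> S \<Longrightarrow> y \<in> S \<Longrightarrow> x \<noteq> y \<Longrightarrow>
      p < card (centre_candidates A B E S (3 * p) x y)"
  shows "has_K3_immersion (A \<union> B) E p"
proof -
  have AB: "A \<inter> B = {}" and "finite A" using bip unfolding bipartite_graph_def by auto
  then have "finite S" using S(1) finite_subset by blast
  then obtain \<phi> where "bij_betw \<phi> {0..<p} S" using ex_bij_betw_nat_finite S(2) by blast
  then have inj: "inj_on \<phi> {0..<p}" and im: "\<phi> ` {0..<p} = S" by (auto simp: bij_betw_def)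
  have "\<exists>P. routing A B E \<phi> p (index_pairs p) P"
  proof (rule routing_exists[OF AB inj])
    show "\<phi> ` {0..<p} \<subseteq> A" using im S(1) by simp
    fix i j assume "(i, j) \<in> index_pairs p"
    then have "\<phi> i \<in> S" "\<phi> j \<in> S" "\<phi> i \<noteq> \<phi> j"
      using im inj_on_eq_iff[OF inj] unfolding index_pairs_def by auto
    then show "p < card (centre_candidates A B E (\<phi> ` {0..<p}) (3 * p) (\<phi> i) (\<phi> j))"
      using centres im by simp
  qed
  then show ?thesis using has_K3_immersion_if_routing[OF AB inj] im S(1) by blast
qed

lemma exists_large_nbhd_with_few_sparse_pairs:
  assumes bip: "bipartite_graph A B E" and "0 < p"
    and p: "real p \<le> min (edge_density A B E * real (card A) / 16)
                         ((edge_density A B E)\<^sup>2 * real (card B) / 192)"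
  defines "D \<equiv> (edge_density A B E)\<^sup>2 * real (card B) / 16"
  shows "\<exists>h\<in>B. 8 * p \<le> card (nbhd E A h) \<and>
           8 * card {(x, y) \<in> nbhd E A h \<times> nbhd E A h. real (codegree E B x y) < D}
             \<le> (card (nbhd E A h))\<^sup>2"
proof -
  define \<alpha> where "\<alpha> = edge_density A B E"
  have p_A: "16 * real p \<le> \<alpha> * real (card A)" using p unfolding \<alpha>_def by auto
  then have "\<alpha> * real (card A) > 0" using \<open>0 < p\<close> by linarith
  then have "card A \<noteq> 0" "card B \<noteq> 0"
    unfolding \<alpha>_def edge_density_def by (auto split: if_split_asm simp: zero_less_divide_iff)
  then have "A \<noteq> {}" "B \<noteq> {}" by auto
  then obtain h where "h \<in> B" and few_sparse:
    "8 * real (card {(x, y) \<in> nbhd E A h \<times> nbhd E A h. real (codegree E B x y) < D})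
       + (\<alpha> * real (card A))\<^sup>2 / 2 \<le> (real (card (nbhd E A h)))\<^sup>2"
    using exists_vertex_with_few_sparse_pairs[OF bip] unfolding D_def \<alpha>_def by blast
  have "(16 * real p)\<^sup>2 \<le> (\<alpha> * real (card A))\<^sup>2"
    using p_A by (intro power_mono) auto
  then have "(8 * real p)\<^sup>2 \<le> (\<alpha> * real (card A))\<^sup>2 / 2"
    unfolding power_mult_distrib by simp (use zero_le_power2[of "real p"] in linarith)
  then have "(8 * real p)\<^sup>2 \<le> (real (card (nbhd E A h)))\<^sup>2" using few_sparse by simp
  then have "8 * real p \<le> real (card (nbhd E A h))" by (rule power2_le_imp_le) simp
  moreover have "0 \<le> (\<alpha> * real (card A))\<^sup>2 / 2" by simp
  then have "8 * real (card {(x, y) \<in> nbhd E A h \<times> nbhd E A h. real (codegree E B x y) < D})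
      \<le> (real (card (nbhd E A h)))\<^sup>2"
    using few_sparse by linarith
  ultimately show ?thesis using \<open>h \<in> B\<close> by (intro bexI[of _ h]) (simp_all flip: of_nat_power)
qed

lemma exists_branch_set:
  assumes bip: "bipartite_graph A B E"
    and p: "real p \<le> min (edge_density A B E * real (card A) / 16)
                         ((edge_density A B E)\<^sup>2 * real (card B) / 192)"
  shows "\<exists>S \<subseteq> A. card S = p \<and>
           (\<forall>x\<in>S. \<forall>y\<in>S. p < card (centre_candidates A B E S (3 * p) x y))"
proof (cases "p = 0")
  case True
  then show ?thesis by auto
next
  case False
  define D where "D = (edge_density A B E)\<^sup>2 * real (card B) / 16"
  define good where "good x y \<longleftrightarrow> D \<le> real (codegree E B x y)" for x y
  have p_D: "12 * real p \<le> D" using p unfolding D_def by auto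
  obtain h where big: "8 * p \<le> card (nbhd E A h)"
    and few_sparse: "8 * card {(x, y) \<in> nbhd E A h \<times> nbhd E A h. real (codegree E B x y) < D}
      \<le> (card (nbhd E A h))\<^sup>2"
    using exists_large_nbhd_with_few_sparse_pairs[OF bip _ p] False unfolding D_def by blast
  have "{(x, y) \<in> nbhd E A h \<times> nbhd E A h. \<not> good x y}
      = {(x, y) \<in> nbhd E A h \<times> nbhd E A h. real (codegree E B x y) < D}"
    unfolding good_def by auto
  then have few_bad: "8 * card {(x, y) \<in> nbhd E A h \<times> nbhd E A h. \<not> good x y} \<le> (card (nbhd E A h))\<^sup>2"
    using few_sparse by simp
  have finA: "finite A" using bip unfolding bipartite_graph_def by auto
  have TA: "nbhd E A h \<subseteq> A" unfolding nbhd_def by auto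
  then have "finite (nbhd E A h)" using finA by (rule finite_subset)
  then obtain S where S: "S \<subseteq> nbhd E A h" "card S = p"
    and many: "\<forall>x\<in>S. \<forall>y\<in>S. p < card {c \<in> nbhd E A h - S. good x c \<and> good y c}"
    using exists_subset_pairwise_many_common_good[OF _ big few_bad] by blast
  have "p < card (centre_candidates A B E S (3 * p) x y)" if "x \<in> S" "y \<in> S" for x y
  proof -
    have "{c \<in> nbhd E A h - S. good x c \<and> good y c} \<subseteq> centre_candidates A B E S (3 * p) x y"
      using TA p_D False unfolding good_def centre_candidates_def by auto
    moreover have "finite (centre_candidates A B E S (3 * p) x y)"
      using finA unfolding centre_candidates_def by simp
    ultimately have "card {c \<in> nbhd E A h - S. good x c \<and> good y c}
        \<le> card (centre_candidates A B E S (3 * p) x y)"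
      by (intro card_mono)
    moreover have "p < card {c \<in> nbhd E A h - S. good x c \<and> good y c}" using many that by blast
    ultimately show ?thesis by linarith
  qed
  then show ?thesis using S TA by blast
qed

theorem lemma5p4:
  fixes A B :: "'a set" and E :: "'a set set" and p :: nat
  assumes "bipartite_graph A B E"
    and "real p \<le> min (edge_density A B E * real (card A) / 16)
                        ((edge_density A B E)\<^sup>2 * real (card B) / 192)"
  shows "has_K3_immersion (A \<union> B) E p"
proof -
  obtain S where "S \<subseteq> A" "card S = p"
    and "\<forall>x\<in>S. \<forall>y\<in>S. p < card (centre_candidates A B E S (3 * p) x y)"
    using exists_branch_set[OF assms] by blast
  then show ?thesis using has_K3_immersion_if_many_centres[OF assms(1)] by blast
qed

end
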